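(* Consider $\partial_t x = F_2 x^{\otimes 2}+F_1x+F_0$, and let $Q=I$ and pivot $s=x(0)$, so that $v(t)=x(t)-x(0)$ solves $\partial_tv=F_{2,s}v^{\otimes2}+F_{1,s}v+F_{0,s}$. Then $v(0)=0$, and there exists $t'>0$ such that $\|v(t)\|\le1$ for $t\le T\le t'$. In particular one may choose $t'=\frac{1}{\|F_{2,s}\|+\|F_{1,s}\|+\|F_{0,s}\|}$, and then for all $t<t'$, $$\|v(t)\|\le t\big(\|F_{2,s}\|+\|F_{1,s}\|+\|F_{0,s}\|\big)<1.$$
   Context: Setting: $x(t)\in\mathbb{R}^n$, $F_2\in\mathbb{R}^{n\times n^2}$, $F_1\in\mathbb{R}^{n\times n}$, $F_0\in\mathbb{R}^n$, Kronecker product $\otimes$; $F_{2,s}=F_2$, $F_{1,s}=F_1+F_2(s\otimes I_n+I_n\otimes s)$, $F_{0,s}=F_2s^{\otimes2}+F_1s+F_0$; $\|\cdot\|$ is the Euclidean norm / induced operator norm; $t\ge0$. *)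

theory Defs
  imports "HOL-Analysis.Analysis"
begin

text \<open>Kronecker product of two vectors in R^n: (u \<otimes> w) indexed by pairs (a,b),
  entry u_a * w_b. Vectors in R^(n^2) are modelled as real^('n \<times> 'n).\<close>
definition kron :: "real^'n \<Rightarrow> real^'n \<Rightarrow> real^('n \<times> 'n)" where
  "kron u w = (\<chi> p. u $ fst p * w $ snd p)"

text \<open>The n^2 x n matrix (s \<otimes> I_n + I_n \<otimes> s): column k, row (a,b) has entry
  s_a [b=k] + [a=k] s_b, so that it maps v to s \<otimes> v + v \<otimes> s.\<close>
definition kron_sym_mat :: "real^'n \<Rightarrow> real^'n^('n \<times> 'n)" where
  "kron_sym_mat s = (\<chi> p k. s $ fst p * (if snd p = k then 1 else 0)
                            + (if fst p = k then 1 else 0) * s $ snd p)"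

definition F2s :: "real^('n \<times> 'n)^'n \<Rightarrow> real^'n \<Rightarrow> real^('n \<times> 'n)^'n" where
  "F2s F2 s = F2"

definition F1s :: "real^('n \<times> 'n)^'n \<Rightarrow> real^'n^'n \<Rightarrow> real^'n \<Rightarrow> real^'n^'n" where
  "F1s F2 F1 s = F1 + F2 ** kron_sym_mat s"

definition F0s :: "real^('n \<times> 'n)^'n \<Rightarrow> real^'n^'n \<Rightarrow> real^'n \<Rightarrow> real^'n \<Rightarrow> real^'n" where
  "F0s F2 F1 F0 s = F2 *v kron s s + F1 *v s + F0"

definition opnorm :: "real^'m^'k \<Rightarrow> real" where
  "opnorm A = onorm (\<lambda>v. A *v v)"

end

theory Submission
  imports Defs
begin

text \<open>Substituting \<open>x = v + s\<close> and expanding the Kronecker square turns the equation for \<open>x\<close>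
  into the shifted equation for \<open>v\<close>. Since \<open>\<parallel>v \<otimes> v\<parallel> = \<parallel>v\<parallel>\<^sup>2\<close>, the right-hand side has norm at most
  \<open>S = \<parallel>F\<^sub>2\<^sub>,\<^sub>s\<parallel> + \<parallel>F\<^sub>1\<^sub>,\<^sub>s\<parallel> + \<parallel>F\<^sub>0\<^sub>,\<^sub>s\<parallel>\<close> as long as \<open>\<parallel>v\<parallel> \<le> 1\<close>, so the mean value inequality gives
  \<open>\<parallel>v t\<parallel> \<le> t S\<close> on every initial interval on which \<open>v\<close> stays in the unit ball. At the first time
  \<open>\<parallel>v\<parallel>\<close> reaches 1 this would force \<open>1 \<le> t S\<close>, so before time \<open>1/S\<close> the unit ball is never left.\<close>

lemma norm_kron: "norm (kron u w) = norm u * norm (w::real^'n)"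
proof -
  have "(norm (kron u w))\<^sup>2 = (\<Sum>p\<in>UNIV \<times> UNIV. (u $ fst p * w $ snd p)\<^sup>2)"
    unfolding power2_norm_eq_inner by (simp add: inner_vec_def kron_def power2_eq_square)
  also have "\<dots> = (\<Sum>a\<in>UNIV. \<Sum>b\<in>UNIV. (u $ a)\<^sup>2 * (w $ b)\<^sup>2)"
    unfolding sum.cartesian_product by (simp add: case_prod_beta power_mult_distrib)
  also have "\<dots> = (\<Sum>a\<in>UNIV. (u $ a)\<^sup>2) * (\<Sum>b\<in>UNIV. (w $ b)\<^sup>2)"
    by (simp add: sum_product)
  also have "\<dots> = (norm u * norm w)\<^sup>2"
    unfolding power_mult_distrib power2_norm_eq_inner by (simp add: inner_vec_def power2_eq_square)
  finally show ?thesis by (simp add: power2_eq_iff_nonneg)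
qed

lemma kron_sym_mat_mult: "kron_sym_mat s *v w = kron s w + kron w (s::real^'n)"
proof -
  have "(\<Sum>k\<in>UNIV. (s $ a * (if b = k then 1 else 0) + (if a = k then 1 else 0) * s $ b) * w $ k)
        = s $ a * w $ b + w $ a * s $ b" for a b
  proof -
    have "(\<Sum>k\<in>UNIV. (s $ a * (if b = k then 1 else 0) + (if a = k then 1 else 0) * s $ b) * w $ k)
       = (\<Sum>k\<in>UNIV. (if b = k then s $ a * w $ k else 0) + (if a = k then s $ b * w $ k else 0))"
      by (rule sum.cong) auto
    then show ?thesis by (simp add: sum.distrib)
  qed
  then show ?thesis
    by (simp add: vec_eq_iff kron_sym_mat_def kron_def matrix_vector_mult_def)
qed

lemma kron_add_self:
  "kron (w + s) (w + s) = kron w w + (kron s w + kron w s) + kron s (s::real^'n)"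
  by (simp add: vec_eq_iff kron_def algebra_simps)

lemma quadratic_field_shift:
  "F2 *v kron (w + s) (w + s) + F1 *v (w + s) + F0
   = F2s F2 s *v kron w w + F1s F2 F1 s *v w + F0s F2 F1 F0 s"
  by (simp add: F2s_def F1s_def F0s_def kron_add_self kron_sym_mat_mult matrix_vector_right_distrib
      matrix_vector_mult_add_rdistrib matrix_vector_mul_assoc[symmetric] algebra_simps)

lemma norm_mult_vec_le_opnorm: "norm (A *v w) \<le> opnorm A * norm w"
  unfolding opnorm_def by (rule onorm) simp

lemma opnorm_nonneg: "0 \<le> opnorm A"
  unfolding opnorm_def by (rule onorm_pos_le) simp

lemma norm_shifted_field_le:
  assumes "norm (w::real^'n) \<le> 1"
  shows "norm (F2s F2 s *v kron w w + F1s F2 F1 s *v w + F0s F2 F1 F0 s)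
     \<le> opnorm (F2s F2 s) + opnorm (F1s F2 F1 s) + norm (F0s F2 F1 F0 s)"
proof -
  have "norm w * norm w \<le> 1"
    using assms by (simp add: mult_le_one)
  then have quadratic: "norm (F2s F2 s *v kron w w) \<le> opnorm (F2s F2 s)"
    using norm_mult_vec_le_opnorm[of "F2s F2 s" "kron w w"] opnorm_nonneg[of "F2s F2 s"]
    by (simp add: norm_kron) (meson mult_left_le order_trans)
  have linear: "norm (F1s F2 F1 s *v w) \<le> opnorm (F1s F2 F1 s)"
    using norm_mult_vec_le_opnorm[of "F1s F2 F1 s" w] opnorm_nonneg[of "F1s F2 F1 s"] assms
    by (meson mult_left_le order_trans)
  show ?thesis
    using quadratic linear norm_triangle_ineq[of "F2s F2 s *v kron w w + F1s F2 F1 s *v w" "F0s F2 F1 F0 s"]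
      norm_triangle_ineq[of "F2s F2 s *v kron w w" "F1s F2 F1 s *v w"]
    by linarith
qed

lemma norm_diff_le_of_vector_derivative_bound:
  fixes v :: "real \<Rightarrow> 'a::real_normed_vector"
  assumes "\<And>t. t \<in> {a..b} \<Longrightarrow> (v has_vector_derivative v' t) (at t within {a..b})"
    and "\<And>t. t \<in> {a..b} \<Longrightarrow> norm (v' t) \<le> B" and "a \<le> b"
  shows "norm (v b - v a) \<le> B * (b - a)"
proof -
  have "norm (v b - v a) \<le> B * norm (b - a)"
  proof (rule differentiable_bound[where f' = "\<lambda>t h. h *\<^sub>R v' t"])
    show "(v has_derivative (\<lambda>h. h *\<^sub>R v' t)) (at t within {a..b})" if "t \<in> {a..b}" for t
      using assms(1)[OF that] by (simp add: has_vector_derivative_def)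
    show "onorm (\<lambda>h. h *\<^sub>R v' t) \<le> B" if "t \<in> {a..b}" for t
    proof -
      have "onorm (\<lambda>h. h *\<^sub>R v' t) = onorm (\<lambda>h::real. h) * norm (v' t)"
        by (rule onorm_scaleR_left) simp
      then show ?thesis
        using assms(2)[OF that] onorm_id[where 'a=real] by simp
    qed
  qed (use assms in auto)
  then show ?thesis using assms(3) by simp
qed

lemma first_hitting_time:
  fixes f :: "real \<Rightarrow> real"
  assumes "continuous_on {a..b} f" and "f a < c" and "\<tau> \<in> {a..b}" and "c \<le> f \<tau>"
  obtains s where "a < s" "s \<le> b" "f s = c" "\<And>\<sigma>. \<sigma> \<in> {a..<s} \<Longrightarrow> f \<sigma> < c"
proof -
  define B where "B = {a..b} \<inter> f -` {c..}"
  have "closed B"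
    unfolding B_def by (rule continuous_closed_preimage[OF assms(1)]) auto
  moreover have "B \<noteq> {}" and bdd: "bdd_below B"
    using assms(3,4) by (auto simp: B_def bdd_below_def)
  ultimately have "Inf B \<in> B"
    by (intro closed_contains_Inf)
  then have s: "a \<le> Inf B" "Inf B \<le> b" "c \<le> f (Inf B)"
    by (auto simp: B_def)
  have below: "f \<sigma> < c" if "\<sigma> \<in> {a..<Inf B}" for \<sigma>
  proof (rule ccontr)
    assume "\<not> f \<sigma> < c"
    then have "\<sigma> \<in> B"
      using that s by (auto simp: B_def)
    then have "Inf B \<le> \<sigma>"
      using bdd by (rule cInf_lower)
    then show False
      using that by simp
  qed
  have "continuous_on {a..Inf B} f"
    using s(2) by (auto intro: continuous_on_subset[OF assms(1)])
  then obtain \<sigma> where \<sigma>: "a \<le> \<sigma>" "\<sigma> \<le> Inf B" "f \<sigma> = c"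
    using IVT'[OF less_imp_le[OF assms(2)] s(3) s(1)] by blast
  then have "f (Inf B) = c"
    using below[of \<sigma>] by (cases "\<sigma> = Inf B") auto
  moreover have "a < Inf B"
    using s assms(2) by (cases "Inf B = a") auto
  ultimately show ?thesis
    using that s below by blast
qed

lemma norm_le_of_derivative_bounded_in_unit_ball:
  fixes v :: "real \<Rightarrow> 'a::real_normed_vector"
  assumes der: "\<And>\<tau>. \<tau> \<in> {0..t} \<Longrightarrow> (v has_vector_derivative v' \<tau>) (at \<tau> within {0..t})"
    and bound: "\<And>\<tau>. \<tau> \<in> {0..t} \<Longrightarrow> norm (v \<tau>) \<le> 1 \<Longrightarrow> norm (v' \<tau>) \<le> S"
    and v0: "v 0 = 0" and "0 \<le> t" and small: "t * S < 1"
  shows "norm (v t) \<le> t * S"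
proof -
  have linear: "norm (v b) \<le> b * S"
    if "0 \<le> b" "b \<le> t" and in_ball: "\<And>\<sigma>. \<sigma> \<in> {0..b} \<Longrightarrow> norm (v \<sigma>) \<le> 1" for b
  proof -
    have "norm (v b - v 0) \<le> S * (b - 0)"
    proof (rule norm_diff_le_of_vector_derivative_bound)
      fix \<sigma> assume \<sigma>: "\<sigma> \<in> {0..b}"
      show "(v has_vector_derivative v' \<sigma>) (at \<sigma> within {0..b})"
        using der[of \<sigma>] \<sigma> that by (auto intro: has_vector_derivative_within_subset)
      show "norm (v' \<sigma>) \<le> S"
        using bound in_ball \<sigma> that by auto
    qed (use that in simp)
    then show ?thesis by (simp add: v0 mult.commute)
  qed
  have "0 \<le> S"
    using bound[of 0] \<open>0 \<le> t\<close> v0 by (simp add: order_trans[OF norm_ge_zero])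
  have cont: "continuous_on {0..t} (\<lambda>\<sigma>. norm (v \<sigma>))"
    using der by (intro continuous_on_norm)
      (metis has_vector_derivative_continuous continuous_on_eq_continuous_within)
  have inside: "norm (v \<sigma>) < 1" if \<sigma>: "\<sigma> \<in> {0..t}" for \<sigma>
  proof (rule ccontr)
    assume "\<not> norm (v \<sigma>) < 1"
    moreover have "norm (v 0) < 1"
      using v0 by simp
    ultimately obtain s where s: "0 < s" "s \<le> t" "norm (v s) = 1"
      and before: "\<And>\<rho>. \<rho> \<in> {0..<s} \<Longrightarrow> norm (v \<rho>) < 1"
      using first_hitting_time[OF cont _ \<sigma>] by (metis not_less)
    have "norm (v \<rho>) \<le> 1" if "\<rho> \<in> {0..s}" for \<rho>
      using before[of \<rho>] s(3) that by (cases "\<rho> = s") auto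
    then have "1 \<le> s * S"
      using linear[of s] s by simp
    also have "\<dots> \<le> t * S"
      using s \<open>0 \<le> S\<close> by (simp add: mult_right_mono)
    finally show False using small by simp
  qed
  show ?thesis
    using linear[of t] inside \<open>0 \<le> t\<close> by (simp add: less_imp_le)
qed

theorem lemma9:
  fixes x :: "real \<Rightarrow> real^'n"
    and F2 :: "real^('n \<times> 'n)^'n" and F1 :: "real^'n^'n" and F0 :: "real^'n"
    and T :: real
  assumes ode: "\<And>t. t \<in> {0..T} \<Longrightarrow>
      (x has_vector_derivative (F2 *v kron (x t) (x t) + F1 *v x t + F0)) (at t within {0..T})"
  defines "s \<equiv> x 0"
    and "v \<equiv> (\<lambda>t. x t - x 0)"
    and "S \<equiv> opnorm (F2s F2 (x 0)) + opnorm (F1s F2 F1 (x 0)) + norm (F0s F2 F1 F0 (x 0))"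
  shows "(\<forall>t\<in>{0..T}. (v has_vector_derivative
             (F2s F2 s *v kron (v t) (v t) + F1s F2 F1 s *v v t + F0s F2 F1 F0 s)) (at t within {0..T}))
       \<and> v 0 = 0
       \<and> (\<exists>t'>0. \<forall>t\<in>{0..T}. t \<le> t' \<longrightarrow> norm (v t) \<le> 1)
       \<and> (\<forall>t\<in>{0..T}. t < 1 / S \<longrightarrow> norm (v t) \<le> t * S \<and> t * S < 1)"
proof -
  let ?D = "\<lambda>t. F2s F2 s *v kron (v t) (v t) + F1s F2 F1 s *v v t + F0s F2 F1 F0 s"
  have der: "(v has_vector_derivative ?D t) (at t within {0..T})" if "t \<in> {0..T}" for t
    using has_vector_derivative_diff[OF ode[OF that] has_vector_derivative_const[of "x 0"]]
      quadratic_field_shift[of F2 "v t" s F1 F0]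
    by (simp add: v_def s_def)
  have S_eq: "S = opnorm (F2s F2 s) + opnorm (F1s F2 F1 s) + norm (F0s F2 F1 F0 s)"
    by (simp add: S_def s_def)
  then have "0 \<le> S"
    by (simp add: opnorm_nonneg)
  have small_time: "norm (v t) \<le> t * S" if "t \<in> {0..T}" "t * S < 1" for t
  proof (rule norm_le_of_derivative_bounded_in_unit_ball[where v' = ?D])
    show "(v has_vector_derivative ?D \<tau>) (at \<tau> within {0..t})" if "\<tau> \<in> {0..t}" for \<tau>
      using der[of \<tau>] that \<open>t \<in> {0..T}\<close> by (auto intro: has_vector_derivative_within_subset)
    show "norm (?D \<tau>) \<le> S" if "\<tau> \<in> {0..t}" "norm (v \<tau>) \<le> 1" for \<tau>
      using norm_shifted_field_le[OF that(2)] by (simp add: S_eq)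
  qed (use that in \<open>simp_all add: v_def\<close>)
  have "\<forall>t\<in>{0..T}. t \<le> 1 / (S + 1) \<longrightarrow> norm (v t) \<le> 1"
  proof (intro ballI impI)
    fix t assume t: "t \<in> {0..T}" "t \<le> 1 / (S + 1)"
    then have "t * (S + 1) \<le> 1"
      using \<open>0 \<le> S\<close> by (simp add: le_divide_eq)
    then have "t * S < 1"
      using t(1) by (cases "t = 0") (auto simp: algebra_simps)
    then show "norm (v t) \<le> 1"
      using small_time[OF t(1)] by simp
  qed
  moreover have "t * S < 1" if "t \<in> {0..T}" "t < 1 / S" for t
    using that \<open>0 \<le> S\<close> by (cases "S = 0") (auto simp: field_simps)
  ultimately show ?thesis
    using der small_time \<open>0 \<le> S\<close> by (auto simp: v_def intro!: exI[of _ "1 / (S + 1)"])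
qed

end
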